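(* Suppose $f(i,y,z)$ is convex in $(y,z)$. For $i=0,\ldots,n-1$, $\omega\in\Omega$, $z\in\mathbb R^D$, define the convex conjugate in $y$, $$f^{\#y}(\omega,i,r,z)=\sup_{y\in\mathbb R}\{ry-f(\omega,i,y,z)\},$$ with effective domain $D^{(i,\omega,z)}_{f^{\#y}}=\{r\in\mathbb R: f^{\#y}(\omega,i,r,z)<\infty\}$; this domain is contained in $[-\alpha^{(0)}_i(\omega),\alpha^{(0)}_i(\omega)]$. Then for every $(M^0,M)\in\mathcal M_{1+D}$ and $i=0,\ldots,n-1$, $$\theta^{up}_i=\max\Big\{S_i,\;\sup_{r\in D^{(i,\omega,z^{up}_i(\omega))}_{f^{\#y}}}\frac{1}{1-r\Delta_i}\Big(\theta^{up}_{i+1}-(M^0_{i+1}-M^0_i)-f^{\#y}(i,r,z^{up}_i)\Delta_i\Big)\Big\},$$ where $\theta^{up}=\theta^{up}(M^0,M)$ and $z^{up}_i=\beta_{i+1}\theta^{up}_{i+1}-(M_{i+1}-M_i)$.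
   Context: Standing setting: $n\ge 1$ and $D\ge 1$ are integers; $(\Omega,\mathcal F,(\mathcal F_i)_{i=0,\ldots,n},P)$ is a filtered probability space and $E_i[\cdot]=E[\cdot\mid\mathcal F_i]$. The constants $\Delta_0,\ldots,\Delta_{n-1}$ are positive reals. $S=(S_i)_{i=0,\ldots,n}$ is an adapted process with values in $\mathbb R\cup\{-\infty\}$, $S_n$ real-valued, with $\sum_{i=0}^{n-1}E[|S_i\mathbf 1_{\{S_i>-\infty\}}|]+E[|S_n|]<\infty$. The random field $f:\Omega\times\{0,\ldots,n-1\}\times\mathbb R\times\mathbb R^D\to\mathbb R$ is measurable, $f(\cdot,i,y,z)$ is $\mathcal F_i$-measurable for every $(y,z)$ (the dependence on $\omega$ is suppressed), $\sum_{i=0}^{n-1}E[|f(i,0,0)|]<\infty$, and there are adapted nonnegative processes $\alpha^{(0)},\ldots,\alpha^{(D)}$ with $|f(i,y,z)-f(i,y',z')|\le\alpha^{(0)}_i|y-y'|+\sum_{d=1}^D\alpha^{(d)}_i|z_d-z'_d|$ for all $(y,z),(y',z')\in\mathbb R\times\mathbb R^D$. $\beta=(\beta_i)_{i=1,\ldots,n}$ is a bounded adapted $\mathbb R^D$-valued process, and for $i=0,\ldots,n-1$ almost surely $\alpha^{(0)}_i<1/\Delta_i$ and $\sum_{d=1}^D\alpha^{(d)}_i|\beta_{d,i+1}|\le 1/\Delta_i$. $\mathcal M_{1+D}$ is the set of pairs $(M^0,M)$ where $M^0$ is a real-valued martingale and $M=(M_1,\ldots,M_D)$ an $\mathbb R^D$-valued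 martingale with $\sum_{d=1}^D\sum_{i=0}^{n-1}E[\alpha^{(d)}_i|M_{d,i+1}-M_{d,i}|]\Delta_i<\infty$. For $(M^0,M)\in\mathcal M_{1+D}$, the (non-adapted) process $\theta^{up}=\theta^{up}(M^0,M)$ is defined pathwise by $\theta^{up}_n=S_n$ and, for $i=n-1,\ldots,0$, as the unique solution (it exists since $\alpha^{(0)}_i\Delta_i<1$) of $$\theta^{up}_i=\max\{S_i,\;\theta^{up}_{i+1}-(M^0_{i+1}-M^0_i)+f(i,\theta^{up}_i,\beta_{i+1}\theta^{up}_{i+1}-(M_{i+1}-M_i))\Delta_i\}.$$ *)

theory Defs
  imports "HOL-Probability.Probability"
begin

definition filtration :: "'a measure \<Rightarrow> (nat \<Rightarrow> 'a measure) \<Rightarrow> nat \<Rightarrow> bool" where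
  "filtration M F n \<longleftrightarrow> (\<forall>i\<le>n. subalgebra M (F i)) \<and>
     (\<forall>i j. i \<le> j \<longrightarrow> j \<le> n \<longrightarrow> sets (F i) \<subseteq> sets (F j))"

definition martingale :: "'a measure \<Rightarrow> (nat \<Rightarrow> 'a measure) \<Rightarrow> nat \<Rightarrow> (nat \<Rightarrow> 'a \<Rightarrow> real) \<Rightarrow> bool" where
  "martingale M F n X \<longleftrightarrow>
     (\<forall>i\<le>n. integrable M (X i) \<and> X i \<in> borel_measurable (F i)) \<and>
     (\<forall>i<n. AE \<omega> in M. real_cond_exp M (F i) (X (Suc i)) \<omega> = X i \<omega>)"

definition fconj :: "('a \<Rightarrow> nat \<Rightarrow> real \<Rightarrow> real^'d \<Rightarrow> real) \<Rightarrow> 'a \<Rightarrow> nat \<Rightarrow> real \<Rightarrow> real^'d \<Rightarrow> ereal" where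
  "fconj f \<omega> i r z = (SUP y. ereal (r * y - f \<omega> i y z))"

definition conj_dom :: "('a \<Rightarrow> nat \<Rightarrow> real \<Rightarrow> real^'d \<Rightarrow> real) \<Rightarrow> 'a \<Rightarrow> nat \<Rightarrow> real^'d \<Rightarrow> real set" where
  "conj_dom f \<omega> i z = {r. fconj f \<omega> i r z < \<infinity>}"

text \<open>Backward recursion: theta_aux k is theta^up at time n - k (pathwise, omega fixed).\<close>
primrec theta_aux :: "nat \<Rightarrow> (nat \<Rightarrow> 'a \<Rightarrow> ereal) \<Rightarrow> ('a \<Rightarrow> nat \<Rightarrow> real \<Rightarrow> real^'d \<Rightarrow> real)
    \<Rightarrow> (nat \<Rightarrow> 'a \<Rightarrow> real^'d) \<Rightarrow> (nat \<Rightarrow> real) \<Rightarrow> (nat \<Rightarrow> 'a \<Rightarrow> real) \<Rightarrow> (nat \<Rightarrow> 'a \<Rightarrow> real^'d)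
    \<Rightarrow> 'a \<Rightarrow> nat \<Rightarrow> real" where
  "theta_aux n S f \<beta> \<Delta> M0 Mv \<omega> 0 = real_of_ereal (S n \<omega>)"
| "theta_aux n S f \<beta> \<Delta> M0 Mv \<omega> (Suc k) =
     (let i = n - Suc k; th = theta_aux n S f \<beta> \<Delta> M0 Mv \<omega> k in
      THE x. ereal x = max (S i \<omega>)
        (ereal (th - (M0 (Suc i) \<omega> - M0 i \<omega>)
                + f \<omega> i x (th *\<^sub>R \<beta> (Suc i) \<omega> - (Mv (Suc i) \<omega> - Mv i \<omega>)) * \<Delta> i)))"

definition theta_up :: "nat \<Rightarrow> (nat \<Rightarrow> 'a \<Rightarrow> ereal) \<Rightarrow> ('a \<Rightarrow> nat \<Rightarrow> real \<Rightarrow> real^'d \<Rightarrow> real)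
    \<Rightarrow> (nat \<Rightarrow> 'a \<Rightarrow> real^'d) \<Rightarrow> (nat \<Rightarrow> real) \<Rightarrow> (nat \<Rightarrow> 'a \<Rightarrow> real) \<Rightarrow> (nat \<Rightarrow> 'a \<Rightarrow> real^'d)
    \<Rightarrow> nat \<Rightarrow> 'a \<Rightarrow> real" where
  "theta_up n S f \<beta> \<Delta> M0 Mv i \<omega> = theta_aux n S f \<beta> \<Delta> M0 Mv \<omega> (n - i)"

definition z_up :: "nat \<Rightarrow> (nat \<Rightarrow> 'a \<Rightarrow> ereal) \<Rightarrow> ('a \<Rightarrow> nat \<Rightarrow> real \<Rightarrow> real^'d \<Rightarrow> real)
    \<Rightarrow> (nat \<Rightarrow> 'a \<Rightarrow> real^'d) \<Rightarrow> (nat \<Rightarrow> real) \<Rightarrow> (nat \<Rightarrow> 'a \<Rightarrow> real) \<Rightarrow> (nat \<Rightarrow> 'a \<Rightarrow> real^'d)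
    \<Rightarrow> nat \<Rightarrow> 'a \<Rightarrow> real^'d" where
  "z_up n S f \<beta> \<Delta> M0 Mv i \<omega> =
     theta_up n S f \<beta> \<Delta> M0 Mv (Suc i) \<omega> *\<^sub>R \<beta> (Suc i) \<omega> - (Mv (Suc i) \<omega> - Mv i \<omega>)"

end

theory Submission
  imports Defs
begin

text \<open>
  Fix \<open>\<omega>\<close> and \<open>i\<close> and write \<open>g(y) = f(i, y, z\<^sub>i)\<close>,
  \<open>a = \<theta>\<^sub>i\<^sub>+\<^sub>1 - (M\<^sup>0\<^sub>i\<^sub>+\<^sub>1 - M\<^sup>0\<^sub>i)\<close>. Since \<open>g\<close> is \<open>\<alpha>\<^sup>0\<^sub>i\<close>-Lipschitz and
  \<open>\<alpha>\<^sup>0\<^sub>i \<Delta>\<^sub>i < 1\<close>, the map \<open>y \<mapsto> a + g(y) \<Delta>\<^sub>i\<close> is a contraction with a unique fixed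
  point \<open>y\<^sup>*\<close>, and the obstacle equation \<open>x = max(S\<^sub>i, a + g(x) \<Delta>\<^sub>i)\<close> is solved exactly
  by \<open>x = max(S\<^sub>i, y\<^sup>*)\<close>. By the Fenchel--Young inequality every \<open>r\<close> in the effective
  domain of \<open>g\<^sup>#\<close> gives \<open>(a - g\<^sup>#(r) \<Delta>\<^sub>i) / (1 - r \<Delta>\<^sub>i) \<le> y\<^sup>*\<close> (the denominator is
  positive because \<open>|r| \<le> \<alpha>\<^sup>0\<^sub>i\<close>), and a subgradient of the convex function \<open>g\<close> at \<open>y\<^sup>*\<close>
  attains equality.
\<close>

lemma convex_on_real_subgradient:
  fixes g :: "real \<Rightarrow> real"
  assumes cv: "convex_on UNIV g"
  shows "\<exists>r. \<forall>t. g y + r * (t - y) \<le> g t"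
proof -
  define slope where "slope t = (g t - g y) / (t - y)" for t
  have slope_mono: "slope s \<le> slope t" if "s < y" "y < t" for s t
  proof -
    have "(g s - g y) / (s - y) \<le> (g s - g t) / (s - t)"
      "(g s - g t) / (s - t) \<le> (g y - g t) / (y - t)"
      using convex_on_slope_le[OF cv _ _ that] by auto
    then show ?thesis
      unfolding slope_def by (smt (verit) minus_divide_divide minus_diff_eq)
  qed
  have bdd: "bdd_below (slope ` {y<..})"
    using slope_mono[of "y - 1"] by (auto simp: bdd_below_def)
  define r where "r = Inf (slope ` {y<..})"
  have "g y + r * (t - y) \<le> g t" for t
  proof (cases t y rule: linorder_cases)
    case greater
    then have "r \<le> slope t"
      unfolding r_def using bdd by (intro cInf_lower) auto
    then have "r * (t - y) \<le> slope t * (t - y)"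
      using greater by (intro mult_right_mono) auto
    then show ?thesis
      using greater by (simp add: slope_def)
  next
    case less
    then have "slope t \<le> r"
      unfolding r_def by (intro cInf_greatest) (auto intro: slope_mono)
    then have "r * (t - y) \<le> slope t * (t - y)"
      using less by (intro mult_right_mono_neg) auto
    then show ?thesis
      using less by (simp add: slope_def)
  qed simp
  then show ?thesis
    by blast
qed

lemma convex_on_Pair_fst:
  assumes "convex_on UNIV F"
  shows "convex_on UNIV (\<lambda>y. F (y, z))"
proof (rule convex_onI)
  fix t :: real and x y :: 'a assume t: "0 < t" "t < 1"
  have "(1 - t) *\<^sub>R (x, z) + t *\<^sub>R (y, z) = ((1 - t) *\<^sub>R x + t *\<^sub>R y, z)"
    by (simp add: algebra_simps)
  with convex_onD[OF assms, of t "(x, z)" "(y, z)"] t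
  show "F ((1 - t) *\<^sub>R x + t *\<^sub>R y, z) \<le> (1 - t) * F (x, z) + t * F (y, z)"
    by simp
qed simp

definition convex_conjugate :: "(real \<Rightarrow> real) \<Rightarrow> real \<Rightarrow> ereal" where
  "convex_conjugate g r = (SUP y. ereal (r * y - g y))"

lemma convex_conjugate_lower: "ereal (r * y - g y) \<le> convex_conjugate g r"
  unfolding convex_conjugate_def by (rule SUP_upper) simp

lemma convex_conjugate_neq_minf: "convex_conjugate g r \<noteq> -\<infinity>"
  using convex_conjugate_lower[of r 0 g] by auto

lemma convex_conjugate_attained:
  assumes "\<And>t. g y + r * (t - y) \<le> g t"
  shows "convex_conjugate g r = ereal (r * y - g y)"
proof (rule antisym)
  show "convex_conjugate g r \<le> ereal (r * y - g y)"
    unfolding convex_conjugate_def using assms by (intro SUP_least) (simp add: algebra_simps)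
qed (rule convex_conjugate_lower)

lemma convex_conjugate_finite_imp_abs_le:
  assumes lip: "C-lipschitz_on UNIV g" and fin: "convex_conjugate g r < \<infinity>"
  shows "\<bar>r\<bar> \<le> C"
proof (rule ccontr)
  assume "\<not> \<bar>r\<bar> \<le> C"
  then have rC: "C < \<bar>r\<bar>" by simp
  obtain B where B: "convex_conjugate g r = ereal B"
    using fin convex_conjugate_neq_minf by (cases "convex_conjugate g r") auto
  define T where "T = (\<bar>B\<bar> + \<bar>g 0\<bar> + 1) / (\<bar>r\<bar> - C)"
  define y where "y = sgn r * T"
  have T: "0 \<le> T" "(\<bar>r\<bar> - C) * T = \<bar>B\<bar> + \<bar>g 0\<bar> + 1"
    using rC by (simp_all add: T_def)
  have "g y - g 0 \<le> C * \<bar>y\<bar>"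
    using lipschitz_onD[OF lip, of y 0] by (simp add: dist_real_def)
  also have "C * \<bar>y\<bar> \<le> C * T"
    using lipschitz_on_nonneg[OF lip] T(1) by (intro mult_left_mono) (auto simp: y_def abs_mult)
  finally have "g y \<le> g 0 + C * T"
    by simp
  moreover have "r * y = \<bar>r\<bar> * T"
    by (simp add: y_def abs_sgn)
  ultimately have "(\<bar>r\<bar> - C) * T - g 0 \<le> r * y - g y"
    by (simp add: algebra_simps)
  then have "B < r * y - g y"
    using T(2) by linarith
  with convex_conjugate_lower[of r y g] B show False
    by simp
qed

lemma lipschitz_contraction_diff_strict_mono:
  fixes h :: "real \<Rightarrow> real"
  assumes "k-lipschitz_on UNIV h" and "k < 1" and "y1 < y2"
  shows "y1 - h y1 < y2 - h y2"
proof -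
  have "h y2 - h y1 \<le> k * (y2 - y1)"
    using lipschitz_onD[OF assms(1), of y2 y1] assms(3) by (simp add: dist_real_def)
  also have "\<dots> < y2 - y1"
    using assms(2,3) by simp
  finally show ?thesis
    by simp
qed

lemma obstacle_fixed_point_iff:
  fixes h :: "real \<Rightarrow> real" and S :: ereal
  assumes lip: "k-lipschitz_on UNIV h" and k: "k < 1" and fixed: "h y = y" and S: "S \<noteq> \<infinity>"
  shows "ereal x = max S (ereal (h x)) \<longleftrightarrow> ereal x = max S (ereal y)"
proof -
  have fixed_unique: "x = y" if "h x = x" for x
    using lipschitz_contraction_diff_strict_mono[OF lip k, of x y]
      lipschitz_contraction_diff_strict_mono[OF lip k, of y x] fixed that
    by (cases x y rule: linorder_cases) auto
  have below_fix: "x < y" if "x - h x < 0" for x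
    using lipschitz_contraction_diff_strict_mono[OF lip k, of y x] fixed that
    by (cases x y rule: linorder_cases) auto
  have above_fix: "y < x" if "x - h x > 0" for x
    using lipschitz_contraction_diff_strict_mono[OF lip k, of x y] fixed that
    by (cases x y rule: linorder_cases) auto
  show ?thesis
  proof
    assume x: "ereal x = max S (ereal (h x))"
    show "ereal x = max S (ereal y)"
    proof (cases "h x = x")
      case True
      then show ?thesis
        using x fixed_unique by simp
    next
      case False
      with x have "h x < x" "ereal x = S"
        by (auto simp: max_def split: if_splits)
      then show ?thesis
        using above_fix[of x] by (auto simp: max_def)
    qed
  next
    assume x: "ereal x = max S (ereal y)"
    show "ereal x = max S (ereal (h x))"
    proof (cases "S \<le> ereal y")
      case True
      with x fixed show ?thesis
        by (simp add: max_def)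
    next
      case False
      with x have "ereal x = S" "y < x"
        by (auto simp: max_def)
      with below_fix[of x] show ?thesis
        by (cases "h x = x") (auto simp: max_def)
    qed
  qed
qed

lemma the_obstacle_fixed_point:
  fixes h :: "real \<Rightarrow> real" and S :: ereal
  assumes "k-lipschitz_on UNIV h" and "k < 1" and "h y = y" and "S \<noteq> \<infinity>"
  shows "ereal (THE x. ereal x = max S (ereal (h x))) = max S (ereal y)"
proof -
  define x where "x = real_of_ereal (max S (ereal y))"
  have x: "ereal x = max S (ereal y)"
    using assms(4) by (cases S) (auto simp: x_def max_def)
  have "(THE x. ereal x = max S (ereal (h x))) = x"
    using x by (intro the_equality) (simp_all add: obstacle_fixed_point_iff[OF assms] flip: x)
  with x show ?thesis
    by simp
qed

lemma fixed_point_eq_SUP_convex_conjugate: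
  fixes g :: "real \<Rightarrow> real"
  assumes \<Delta>: "\<Delta> > 0" and lip: "C-lipschitz_on UNIV g" and C\<Delta>: "C * \<Delta> < 1"
    and cv: "convex_on UNIV g" and fixed: "a + g y * \<Delta> = y"
  shows "ereal y = (SUP r \<in> {r. convex_conjugate g r < \<infinity>}.
            ereal ((a - real_of_ereal (convex_conjugate g r) * \<Delta>) / (1 - r * \<Delta>)))"
proof -
  let ?v = "\<lambda>r. (a - real_of_ereal (convex_conjugate g r) * \<Delta>) / (1 - r * \<Delta>)"
  have denom_pos: "0 < 1 - r * \<Delta>" if "convex_conjugate g r < \<infinity>" for r
  proof -
    have "r * \<Delta> \<le> C * \<Delta>"
      using convex_conjugate_finite_imp_abs_le[OF lip that] \<Delta> by (intro mult_right_mono) auto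
    with C\<Delta> show ?thesis
      by simp
  qed
  have upper: "?v r \<le> y" if fin: "convex_conjugate g r < \<infinity>" for r
  proof -
    obtain B where B: "convex_conjugate g r = ereal B"
      using fin convex_conjugate_neq_minf by (cases "convex_conjugate g r") auto
    have "(r * y - g y) * \<Delta> \<le> B * \<Delta>"
      using convex_conjugate_lower[of r y g] B \<Delta> by (intro mult_right_mono) auto
    then have "a - B * \<Delta> \<le> y * (1 - r * \<Delta>)"
      using fixed by (simp add: algebra_simps)
    then show ?thesis
      using B denom_pos[OF fin] by (simp add: divide_le_eq mult.commute)
  qed
  obtain r where "\<And>t. g y + r * (t - y) \<le> g t"
    using convex_on_real_subgradient[OF cv] by blast
  then have conj_r: "convex_conjugate g r = ereal (r * y - g y)"
    by (rule convex_conjugate_attained)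
  then have "a - real_of_ereal (convex_conjugate g r) * \<Delta> = y * (1 - r * \<Delta>)"
    using fixed by (simp add: algebra_simps)
  moreover have "0 < 1 - r * \<Delta>"
    using denom_pos conj_r by simp
  ultimately have attained: "?v r = y"
    by simp
  show ?thesis
  proof (rule antisym)
    show "ereal y \<le> (SUP r \<in> {r. convex_conjugate g r < \<infinity>}. ereal (?v r))"
      using attained conj_r by (intro SUP_upper2[of r]) auto
    show "(SUP r \<in> {r. convex_conjugate g r < \<infinity>}. ereal (?v r)) \<le> ereal y"
      using upper by (intro SUP_least) auto
  qed
qed

lemma obstacle_equation_conjugate_form:
  fixes g :: "real \<Rightarrow> real" and S :: ereal
  assumes \<Delta>: "\<Delta> > 0" and lip: "C-lipschitz_on UNIV g" and C\<Delta>: "C * \<Delta> < 1"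
    and cv: "convex_on UNIV g" and S: "S \<noteq> \<infinity>"
  shows "ereal (THE x. ereal x = max S (ereal (a + g x * \<Delta>))) =
     max S (SUP r \<in> {r. convex_conjugate g r < \<infinity>}.
        ereal ((a - real_of_ereal (convex_conjugate g r) * \<Delta>) / (1 - r * \<Delta>)))"
proof -
  have contr: "(C * \<Delta>)-lipschitz_on UNIV (\<lambda>x. a + g x * \<Delta>)"
    using lip \<Delta> by (auto intro!: lipschitz_onI simp: lipschitz_on_def dist_real_def
        left_diff_distrib[symmetric] abs_mult mult_right_mono)
  obtain y where fixed: "a + g y * \<Delta> = y"
    using banach_fix_type[of "C * \<Delta>" "\<lambda>x. a + g x * \<Delta>"] contr C\<Delta>
    by (auto simp: lipschitz_on_def)
  show ?thesis
    using the_obstacle_fixed_point[OF contr C\<Delta>, of y S] fixed S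
      fixed_point_eq_SUP_convex_conjugate[OF \<Delta> lip C\<Delta> cv fixed] by simp
qed

lemma fconj_eq_convex_conjugate: "fconj f \<omega> i r z = convex_conjugate (\<lambda>y. f \<omega> i y z) r"
  by (simp add: fconj_def convex_conjugate_def)

lemma conj_dom_eq: "conj_dom f \<omega> i z = {r. convex_conjugate (\<lambda>y. f \<omega> i y z) r < \<infinity>}"
  by (simp add: conj_dom_def fconj_eq_convex_conjugate)

lemma theta_up_recursion:
  assumes "i < n"
  shows "theta_up n S f \<beta> \<Delta> M0 Mv i \<omega> = (THE x. ereal x = max (S i \<omega>)
      (ereal (theta_up n S f \<beta> \<Delta> M0 Mv (Suc i) \<omega> - (M0 (Suc i) \<omega> - M0 i \<omega>)
         + f \<omega> i x (z_up n S f \<beta> \<Delta> M0 Mv i \<omega>) * \<Delta> i)))"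
proof -
  have "n - i = Suc (n - Suc i)" "n - Suc (n - Suc i) = i"
    using assms by auto
  then show ?thesis
    unfolding theta_up_def z_up_def by (simp add: Let_def)
qed

theorem proposition3p2:
  fixes M :: "'a measure" and F :: "nat \<Rightarrow> 'a measure" and n :: nat
    and \<Delta> :: "nat \<Rightarrow> real"
    and S :: "nat \<Rightarrow> 'a \<Rightarrow> ereal"
    and f :: "'a \<Rightarrow> nat \<Rightarrow> real \<Rightarrow> real^'d \<Rightarrow> real"
    and \<alpha>0 :: "nat \<Rightarrow> 'a \<Rightarrow> real" and \<alpha> :: "'d \<Rightarrow> nat \<Rightarrow> 'a \<Rightarrow> real"
    and \<beta> :: "nat \<Rightarrow> 'a \<Rightarrow> real^'d"
    and M0 :: "nat \<Rightarrow> 'a \<Rightarrow> real" and Mv :: "nat \<Rightarrow> 'a \<Rightarrow> real^'d"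
  assumes prob: "prob_space M"
    and filt: "filtration M F n"
    and n_pos: "n \<ge> 1"
    and Delta_pos: "\<forall>i<n. \<Delta> i > 0"
    (* S: adapted, values in R \<union> {-\<infinity>}, S_n real, integrability *)
    and S_adapt: "\<forall>i\<le>n. S i \<in> borel_measurable (F i)"
    and S_not_pinf: "\<forall>i\<le>n. \<forall>\<omega>\<in>space M. S i \<omega> \<noteq> \<infinity>"
    and S_n_real: "\<forall>\<omega>\<in>space M. S n \<omega> \<noteq> -\<infinity>"
    and S_int: "\<forall>i<n. integrable M (\<lambda>\<omega>. if S i \<omega> > -\<infinity> then real_of_ereal (S i \<omega>) else 0)"
    and S_n_int: "integrable M (\<lambda>\<omega>. real_of_ereal (S n \<omega>))"
    (* f: measurable, adapted, integrable at 0, Lipschitz, convex *)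
    and f_meas: "\<forall>i<n. (\<lambda>(\<omega>, y, z). f \<omega> i y z) \<in> borel_measurable (M \<Otimes>\<^sub>M (borel \<Otimes>\<^sub>M borel))"
    and f_adapt: "\<forall>i<n. \<forall>y z. (\<lambda>\<omega>. f \<omega> i y z) \<in> borel_measurable (F i)"
    and f_int: "\<forall>i<n. integrable M (\<lambda>\<omega>. f \<omega> i 0 0)"
    and \<alpha>0_adapt: "\<forall>i\<le>n. \<alpha>0 i \<in> borel_measurable (F i)"
    and \<alpha>_adapt: "\<forall>d. \<forall>i\<le>n. \<alpha> d i \<in> borel_measurable (F i)"
    and \<alpha>0_nonneg: "\<forall>i\<le>n. \<forall>\<omega>\<in>space M. \<alpha>0 i \<omega> \<ge> 0"
    and \<alpha>_nonneg: "\<forall>d. \<forall>i\<le>n. \<forall>\<omega>\<in>space M. \<alpha> d i \<omega> \<ge> 0"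
    and f_lip: "\<forall>i<n. \<forall>\<omega>\<in>space M. \<forall>y y' z z'.
        \<bar>f \<omega> i y z - f \<omega> i y' z'\<bar> \<le> \<alpha>0 i \<omega> * \<bar>y - y'\<bar> + (\<Sum>d\<in>UNIV. \<alpha> d i \<omega> * \<bar>z $ d - z' $ d\<bar>)"
    and f_convex: "\<forall>i<n. \<forall>\<omega>\<in>space M. convex_on UNIV (\<lambda>(y, z). f \<omega> i y z)"
    (* beta: bounded, adapted *)
    and \<beta>_adapt: "\<forall>i\<in>{1..n}. \<beta> i \<in> borel_measurable (F i)"
    and \<beta>_bdd: "\<exists>C. \<forall>i\<in>{1..n}. \<forall>\<omega>\<in>space M. norm (\<beta> i \<omega>) \<le> C"
    and \<alpha>0_small: "\<forall>i<n. AE \<omega> in M. \<alpha>0 i \<omega> < 1 / \<Delta> i"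
    and \<alpha>\<beta>_small: "\<forall>i<n. AE \<omega> in M. (\<Sum>d\<in>UNIV. \<alpha> d i \<omega> * \<bar>\<beta> (Suc i) \<omega> $ d\<bar>) \<le> 1 / \<Delta> i"
    (* (M0, M) \<in> M_{1+D} *)
    and M0_mart: "martingale M F n M0"
    and Mv_mart: "\<forall>d. martingale M F n (\<lambda>i \<omega>. Mv i \<omega> $ d)"
    and Mv_int: "(\<Sum>d\<in>UNIV. \<Sum>i<n.
        (\<integral>\<^sup>+ \<omega>. ennreal (\<alpha> d i \<omega> * \<bar>Mv (Suc i) \<omega> $ d - Mv i \<omega> $ d\<bar>) \<partial>M) * ennreal (\<Delta> i)) < \<infinity>"
  shows "AE \<omega> in M. \<forall>i<n.
     ereal (theta_up n S f \<beta> \<Delta> M0 Mv i \<omega>) =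
       max (S i \<omega>)
         (SUP r \<in> conj_dom f \<omega> i (z_up n S f \<beta> \<Delta> M0 Mv i \<omega>).
            ereal ((theta_up n S f \<beta> \<Delta> M0 Mv (Suc i) \<omega> - (M0 (Suc i) \<omega> - M0 i \<omega>)
                    - real_of_ereal (fconj f \<omega> i r (z_up n S f \<beta> \<Delta> M0 Mv i \<omega>)) * \<Delta> i)
                   / (1 - r * \<Delta> i)))"
proof -
  \<comment> \<open>The identity is pathwise: besides \<open>S < \<infinity>\<close> only the Lipschitz, convexity and
    smallness hypotheses on \<open>f\<close> and \<open>\<alpha>0\<close> enter; the rest describe the stochastic setting.\<close>
  interpret prob_space M by (rule prob)
  have "AE \<omega> in M. \<forall>i\<in>{..<n}. \<alpha>0 i \<omega> < 1 / \<Delta> i"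
    using \<alpha>0_small by (intro eventually_ball_finite) auto
  with AE_space show ?thesis
  proof eventually_elim
    case (elim \<omega>)
    show ?case
    proof (intro allI impI)
      fix i assume i: "i < n"
      let ?z = "z_up n S f \<beta> \<Delta> M0 Mv i \<omega>"
      have "\<bar>f \<omega> i y ?z - f \<omega> i y' ?z\<bar> \<le> \<alpha>0 i \<omega> * \<bar>y - y'\<bar>" for y y'
        using f_lip[rule_format, where y = y and y' = y' and z = ?z and z' = ?z] i elim by simp
      then have "(\<alpha>0 i \<omega>)-lipschitz_on UNIV (\<lambda>y. f \<omega> i y ?z)"
        using \<alpha>0_nonneg i elim by (auto intro!: lipschitz_onI simp: dist_real_def)
      moreover have "\<alpha>0 i \<omega> * \<Delta> i < 1"
        using elim i Delta_pos by (simp add: less_divide_eq)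
      moreover have "convex_on UNIV (\<lambda>y. f \<omega> i y ?z)"
        using convex_on_Pair_fst[where F = "\<lambda>(y, z). f \<omega> i y z"] f_convex i elim by simp
      ultimately show "ereal (theta_up n S f \<beta> \<Delta> M0 Mv i \<omega>) = max (S i \<omega>)
          (SUP r \<in> conj_dom f \<omega> i ?z.
            ereal ((theta_up n S f \<beta> \<Delta> M0 Mv (Suc i) \<omega> - (M0 (Suc i) \<omega> - M0 i \<omega>)
                    - real_of_ereal (fconj f \<omega> i r ?z) * \<Delta> i) / (1 - r * \<Delta> i)))"
        unfolding theta_up_recursion[OF i] conj_dom_eq fconj_eq_convex_conjugate
        using obstacle_equation_conjugate_form Delta_pos S_not_pinf i elim by simp
    qed
  qed
qed

end
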